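(* $\mathcal{SED} \cap \mathcal{USAT} \subsetneq \mathcal{VMU}$; moreover every unsatisfiable multi-clause-set $F$ with $\sigma(F) = \delta(F)$ has its underlying clause-set in $\mathcal{VMU}$.
   Context: Literals come with a fixed-point-free involution $x \mapsto \overline{x}$; variables are positive literals. A clause is a finite set $C$ of literals with $C \cap \overline{C} = \emptyset$; a clause-set is a finite set of clauses; a multi-clause-set assigns finitely many clauses a positive multiplicity, and its underlying clause-set is the set of those clauses. $\mathrm{var}(F)$, $n(F) = |\mathrm{var}(F)|$, $c(F)$ the number of clauses counted with multiplicity, $\delta(F) = c(F) - n(F)$. Surplus: $\sigma(F) = \min_{\emptyset \ne V \subseteq \mathrm{var}(F)} (\#\{\text{clauses (with multiplicity) containing a variable of } V\} - |V|)$ for $n(F)>0$, $\sigma(F) = 0$ otherwise. $F$ is satisfiable iff some assignment of truth values makes a literal of every clause true; a multi-clause-set is (un)satisfiable iff its underlying clause-set is. $\mathcal{USAT}$ is the class of unsatisfiable clause-sets; $\mathcal{SED}$ is the class of clause-sets $F$ with $\sigma(F) = \delta(F)$. $\mathcal{VMU}$ is the class of unsatisfiable clause-sets $F$ such that every unsatisfiable $F' \subseteq F$ has $\mathrm{var}(F') = \mathrm{var}(F)$. *)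

theory Defs
  imports Main "HOL-Library.Multiset"
begin

datatype 'a lit = Pos 'a | Neg 'a

fun comp :: "'a lit \<Rightarrow> 'a lit" where
  "comp (Pos v) = Neg v"
| "comp (Neg v) = Pos v"

fun lvar :: "'a lit \<Rightarrow> 'a" where
  "lvar (Pos v) = v"
| "lvar (Neg v) = v"

type_synonym 'a clause = "'a lit set"

definition is_clause :: "'a clause \<Rightarrow> bool" where
  "is_clause C \<longleftrightarrow> finite C \<and> C \<inter> comp ` C = {}"

definition is_clause_set :: "'a clause set \<Rightarrow> bool" where
  "is_clause_set F \<longleftrightarrow> finite F \<and> (\<forall>C\<in>F. is_clause C)"

definition is_mclause_set :: "'a clause multiset \<Rightarrow> bool" where
  "is_mclause_set F \<longleftrightarrow> (\<forall>C\<in>#F. is_clause C)"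

definition cvar :: "'a clause \<Rightarrow> 'a set" where
  "cvar C = lvar ` C"

definition mvar :: "'a clause multiset \<Rightarrow> 'a set" where
  "mvar F = (\<Union>C\<in>set_mset F. cvar C)"

definition mn :: "'a clause multiset \<Rightarrow> nat" where
  "mn F = card (mvar F)"

definition mc :: "'a clause multiset \<Rightarrow> nat" where
  "mc F = size F"

definition mdelta :: "'a clause multiset \<Rightarrow> int" where
  "mdelta F = int (mc F) - int (mn F)"

definition msigma :: "'a clause multiset \<Rightarrow> int" where
  "msigma F = (if mn F = 0 then 0 else
     Min {int (size (filter_mset (\<lambda>C. cvar C \<inter> V \<noteq> {}) F)) - int (card V)
          | V. V \<noteq> {} \<and> V \<subseteq> mvar F})"

definition lit_true :: "('a \<Rightarrow> bool) \<Rightarrow> 'a lit \<Rightarrow> bool" where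
  "lit_true \<phi> x = (case x of Pos v \<Rightarrow> \<phi> v | Neg v \<Rightarrow> \<not> \<phi> v)"

definition sat :: "'a clause set \<Rightarrow> bool" where
  "sat F \<longleftrightarrow> (\<exists>\<phi>. \<forall>C\<in>F. \<exists>x\<in>C. lit_true \<phi> x)"

text \<open>Clause-set notions: a clause-set is the multi-clause-set with all multiplicities 1.\<close>
definition var :: "'a clause set \<Rightarrow> 'a set" where
  "var F = mvar (mset_set F)"

definition delta :: "'a clause set \<Rightarrow> int" where
  "delta F = mdelta (mset_set F)"

definition sigma :: "'a clause set \<Rightarrow> int" where
  "sigma F = msigma (mset_set F)"

definition USAT :: "'a clause set set" where
  "USAT = {F. is_clause_set F \<and> \<not> sat F}"

definition SED :: "'a clause set set" where
  "SED = {F. is_clause_set F \<and> sigma F = delta F}"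

definition VMU :: "'a clause set set" where
  "VMU = {F. F \<in> USAT \<and> (\<forall>F'. F' \<subseteq> F \<and> F' \<in> USAT \<longrightarrow> var F' = var F)}"

end

theory Submission
  imports Defs
begin

text \<open>If \<open>F\<close> is unsatisfiable with \<open>\<sigma>(F) = \<delta>(F)\<close> but some unsatisfiable \<open>F' \<subseteq> F\<close> misses a
  variable, pick a minimally unsatisfiable \<open>M \<subseteq> F'\<close> and let \<open>V\<close> be the variables of \<open>F\<close> not
  occurring in \<open>M\<close>. No clause of \<open>M\<close> touches \<open>V\<close>, so the surplus at \<open>V\<close> is at most
  \<open>(c(F) - c(M)) - (n(F) - n(M)) = \<delta>(F) - \<delta>(M)\<close>, which is \<open>< \<delta>(F)\<close> by Tarsi's lemma \<open>\<delta>(M) \<ge> 1\<close>.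

  Tarsi's lemma: if \<open>\<delta>(M) \<le> 0\<close>, a proper subset \<open>S\<close> of \<open>M\<close> of maximal deficiency leaves \<open>M - S\<close>
  satisfying Hall's condition for the variables outside \<open>S\<close>; a system of distinct representatives
  satisfies \<open>M - S\<close> using only those variables, and together with a satisfying assignment of \<open>S\<close>
  (which exists by minimality) this satisfies \<open>M\<close>.

  Strictness of the inclusion is witnessed by \<open>{\<bottom>}\<close>, which is in \<open>VMU\<close> but has \<open>\<sigma> = 0 \<noteq> 1 = \<delta>\<close>.\<close>

definition hall_condition :: "'i set \<Rightarrow> ('i \<Rightarrow> 'b set) \<Rightarrow> bool" where
  "hall_condition I A \<longleftrightarrow> (\<forall>J\<subseteq>I. card J \<le> card (\<Union>(A ` J)))"

lemma hall_condition_subset: "hall_condition I A \<Longrightarrow> J \<subseteq> I \<Longrightarrow> hall_condition J A"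
  by (auto simp: hall_condition_def)

lemma hall_condition_Diff_critical:
  assumes hall: "hall_condition I A" and fin: "finite I" "\<forall>i\<in>I. finite (A i)"
    and J: "J \<subseteq> I" "card J = card (\<Union>(A ` J))"
  shows "hall_condition (I - J) (\<lambda>i. A i - \<Union>(A ` J))"
  unfolding hall_condition_def
proof (intro allI impI)
  fix K assume K: "K \<subseteq> I - J"
  let ?B = "\<lambda>i. A i - \<Union>(A ` J)"
  have "finite J" "finite K" using J K fin(1) finite_subset by blast+
  have "J \<union> K \<subseteq> I" using J K by blast
  then have "finite (\<Union>(A ` (J \<union> K)))" using fin finite_subset by (meson finite_UN_I subsetD)
  have split: "\<Union>(A ` (J \<union> K)) = \<Union>(A ` J) \<union> \<Union>(?B ` K)" by blast
  have "card J + card K = card (J \<union> K)"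
    using K \<open>finite J\<close> \<open>finite K\<close> by (subst card_Un_disjoint) auto
  also have "\<dots> \<le> card (\<Union>(A ` (J \<union> K)))"
    using hall \<open>J \<union> K \<subseteq> I\<close> unfolding hall_condition_def by blast
  also have "\<dots> = card (\<Union>(A ` J)) + card (\<Union>(?B ` K))"
    using \<open>finite (\<Union>(A ` (J \<union> K)))\<close> unfolding split by (intro card_Un_disjoint) auto
  finally show "card K \<le> card (\<Union>(?B ` K))" using J(2) by simp
qed

lemma hall_condition_Diff_elem:
  assumes strict: "\<forall>J\<subseteq>I. J \<noteq> {} \<and> J \<noteq> I \<longrightarrow> card J < card (\<Union>(A ` J))" and "i \<in> I"
  shows "hall_condition (I - {i}) (\<lambda>j. A j - {a})"
  unfolding hall_condition_def
proof (intro allI impI)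
  fix K assume K: "K \<subseteq> I - {i}"
  show "card K \<le> card (\<Union>((\<lambda>j. A j - {a}) ` K))"
  proof (cases "K = {}")
    case False
    then have "card K < card (\<Union>(A ` K))" using strict K \<open>i \<in> I\<close> by blast
    moreover have "card (\<Union>(A ` K)) - 1 \<le> card (\<Union>(A ` K) - {a})"
      using diff_card_le_card_Diff[of "{a}" "\<Union>(A ` K)"] by simp
    moreover have "\<Union>((\<lambda>j. A j - {a}) ` K) = \<Union>(A ` K) - {a}" by blast
    ultimately show ?thesis by simp
  qed simp
qed

lemma sdr_of_critical_split:
  assumes "J \<subseteq> I" and f: "inj_on f J" "\<forall>i\<in>J. f i \<in> A i"
    and g: "inj_on g (I - J)" "\<forall>i\<in>I - J. g i \<in> A i - \<Union>(A ` J)"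
  shows "\<exists>h. inj_on h I \<and> (\<forall>i\<in>I. h i \<in> A i)"
proof -
  let ?h = "\<lambda>i. if i \<in> J then f i else g i"
  have "?h ` J \<inter> ?h ` (I - J) = {}" using f(2) g(2) by auto
  then have "inj_on ?h (J \<union> (I - J))"
    using f(1) g(1) unfolding inj_on_Un by (auto simp: inj_on_def)
  moreover have "J \<union> (I - J) = I" using assms(1) by blast
  ultimately show ?thesis using f(2) g(2) by (intro exI[of _ ?h]) auto
qed

lemma sdr_of_fun_upd:
  assumes "a \<in> A i" and g: "inj_on g (I - {i})" "\<forall>j\<in>I - {i}. g j \<in> A j - {a}"
  shows "\<exists>h. inj_on h I \<and> (\<forall>j\<in>I. h j \<in> A j)"
proof -
  have "inj_on (g(i := a)) I" unfolding inj_on_def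
  proof (intro ballI impI)
    fix x y assume "x \<in> I" "y \<in> I" "(g(i := a)) x = (g(i := a)) y"
    then show "x = y" using g by (cases "x = i"; cases "y = i") (auto simp: inj_on_def)
  qed
  moreover have "\<forall>j\<in>I. (g(i := a)) j \<in> A j" using g assms(1) by auto
  ultimately show ?thesis by blast
qed

theorem hall_marriage:
  assumes "finite I" "\<forall>i\<in>I. finite (A i)" "hall_condition I A"
  shows "\<exists>f. inj_on f I \<and> (\<forall>i\<in>I. f i \<in> A i)"
  using assms
proof (induction "card I" arbitrary: I A rule: less_induct)
  case less
  show ?case
  proof (cases "\<exists>J\<subseteq>I. J \<noteq> {} \<and> J \<noteq> I \<and> card J = card (\<Union>(A ` J))")
    case True
    then obtain J where J: "J \<subseteq> I" "J \<noteq> {}" "J \<noteq> I" "card J = card (\<Union>(A ` J))" by blast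
    have "finite J" using J(1) less.prems(1) finite_subset by blast
    have "card J < card I" "card (I - J) < card I"
      using J(1-3) less.prems(1) by (auto intro!: psubset_card_mono)
    have J_fin: "\<forall>i\<in>J. finite (A i)" and J_hall: "hall_condition J A"
      using J(1) less.prems(2,3) hall_condition_subset by auto
    obtain f where f: "inj_on f J" "\<forall>i\<in>J. f i \<in> A i"
      using less.hyps[OF \<open>card J < card I\<close> \<open>finite J\<close> J_fin J_hall] by blast
    have rest_fin: "finite (I - J)" "\<forall>i\<in>I - J. finite (A i - \<Union>(A ` J))"
      using less.prems(1,2) by auto
    obtain g where g: "inj_on g (I - J)" "\<forall>i\<in>I - J. g i \<in> A i - \<Union>(A ` J)"
      using less.hyps[OF \<open>card (I - J) < card I\<close> rest_fin
        hall_condition_Diff_critical[OF less.prems(3,1,2) J(1,4)]] by blast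
    show ?thesis using J(1) f g by (rule sdr_of_critical_split)
  next
    case False
    then have strict: "\<forall>J\<subseteq>I. J \<noteq> {} \<and> J \<noteq> I \<longrightarrow> card J < card (\<Union>(A ` J))"
      using less.prems(3) by (auto simp: hall_condition_def order.order_iff_strict)
    show ?thesis
    proof (cases "I = {}")
      case False
      then obtain i where "i \<in> I" by blast
      have "card {i} \<le> card (A i)" using less.prems(3) \<open>i \<in> I\<close> by (auto simp: hall_condition_def)
      then obtain a where "a \<in> A i" by fastforce
      have "card (I - {i}) < card I" using less.prems(1) \<open>i \<in> I\<close> by (rule card_Diff1_less)
      moreover have rest_fin: "finite (I - {i})" "\<forall>j\<in>I - {i}. finite (A j - {a})"
        using less.prems(1,2) by auto
      ultimately obtain g where g: "inj_on g (I - {i})" "\<forall>j\<in>I - {i}. g j \<in> A j - {a}"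
        using less.hyps[OF _ rest_fin hall_condition_Diff_elem[OF strict \<open>i \<in> I\<close>]] by blast
      show ?thesis using \<open>a \<in> A i\<close> g by (rule sdr_of_fun_upd)
    qed simp
  qed
qed

lemma lit_true_cong: "\<phi> (lvar x) = \<psi> (lvar x) \<Longrightarrow> lit_true \<phi> x \<longleftrightarrow> lit_true \<psi> x"
  by (cases x) (simp_all add: lit_true_def)

lemma assignment_from_distinct_vars:
  assumes "inj_on f G" "\<forall>C\<in>G. f C \<in> cvar C"
  shows "\<exists>\<psi>. \<forall>C\<in>G. \<exists>x\<in>C. lvar x = f C \<and> lit_true \<psi> x"
proof -
  have "\<forall>C\<in>G. \<exists>x\<in>C. lvar x = f C" using assms(2) unfolding cvar_def by force
  then obtain l where l: "\<forall>C\<in>G. l C \<in> C \<and> lvar (l C) = f C" by metis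
  define \<psi> where "\<psi> v = (case l (inv_into G f v) of Pos _ \<Rightarrow> True | Neg _ \<Rightarrow> False)" for v
  have "lit_true \<psi> (l C)" if "C \<in> G" for C
  proof -
    have "inv_into G f (f C) = C" using assms(1) that by (rule inv_into_f_f)
    then show ?thesis using l that by (cases "l C") (auto simp: \<psi>_def lit_true_def)
  qed
  then show ?thesis using l by blast
qed

lemma var_eq_UN: "finite F \<Longrightarrow> var F = (\<Union>C\<in>F. cvar C)"
  by (simp add: var_def mvar_def)

lemma var_mono:
  assumes "finite G" "F \<subseteq> G"
  shows "var F \<subseteq> var G"
  using assms finite_subset[OF assms(2,1)] by (auto simp: var_eq_UN)

lemma mvar_eq_var: "mvar F = var (set_mset F)"
  by (simp add: var_def mvar_def)

lemma is_clause_set_subset: "is_clause_set F \<Longrightarrow> G \<subseteq> F \<Longrightarrow> is_clause_set G"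
  by (auto simp: is_clause_set_def finite_subset)

lemma finite_var: "is_clause_set F \<Longrightarrow> finite (var F)"
  by (auto simp: is_clause_set_def is_clause_def var_eq_UN cvar_def)

lemma delta_eq_card: "finite F \<Longrightarrow> delta F = int (card F) - int (card (var F))"
  by (simp add: delta_def mdelta_def mc_def mn_def var_def)

definition minimally_unsat :: "'a clause set \<Rightarrow> bool" where
  "minimally_unsat F \<longleftrightarrow> \<not> sat F \<and> (\<forall>F'\<subset>F. sat F')"

lemma minimally_unsat_subset_exists:
  assumes "finite F" "\<not> sat F"
  obtains M where "M \<subseteq> F" "minimally_unsat M"
proof -
  let ?U = "{M. M \<subseteq> F \<and> \<not> sat M}"
  have "finite ?U" "F \<in> ?U" using assms by auto
  then obtain M where M: "M \<in> ?U" "\<forall>M'\<in>?U. M' \<le> M \<longrightarrow> M = M'"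
    using finite_has_minimal2[of ?U F] by auto
  have "sat M'" if "M' \<subset> M" for M'
    using M that by blast
  then show ?thesis using that M(1) unfolding minimally_unsat_def by blast
qed

lemma hall_condition_outside_max_delta:
  assumes F: "is_clause_set F" and S: "S \<subseteq> F" "\<forall>T\<subseteq>F. delta T \<le> delta S"
  shows "hall_condition (F - S) (\<lambda>C. cvar C - var S)"
  unfolding hall_condition_def
proof (intro allI impI)
  fix R assume R: "R \<subseteq> F - S"
  have "is_clause_set S" "is_clause_set R" using F S(1) R is_clause_set_subset by blast+
  then have fin: "finite S" "finite R" "finite (var S)" "finite (var R)"
    using finite_var by (auto simp: is_clause_set_def)
  have "var (S \<union> R) = var S \<union> (var R - var S)"
    using fin by (auto simp: var_eq_UN)
  then have "card (var (S \<union> R)) = card (var S) + card (var R - var S)"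
    using fin by (simp only:) (rule card_Un_disjoint, auto)
  moreover have "card (S \<union> R) = card S + card R" using R fin by (intro card_Un_disjoint) auto
  moreover have "S \<union> R \<subseteq> F" using S(1) R by blast
  then have "delta (S \<union> R) \<le> delta S" using S(2) by blast
  moreover have "(\<Union>C\<in>R. cvar C - var S) = var R - var S" using fin by (auto simp: var_eq_UN)
  ultimately show "card R \<le> card (\<Union>C\<in>R. cvar C - var S)" using fin by (simp add: delta_eq_card)
qed

lemma max_delta_proper_subset_exists:
  fixes F :: "'a clause set"
  assumes "finite F" "F \<noteq> {}" "delta F \<le> 0"
  obtains S where "S \<subset> F" "\<forall>T\<subseteq>F. delta T \<le> delta S"
proof -
  obtain S where S: "S \<in> Pow F" "Max (delta ` Pow F) = delta S"
    using obtains_MAX[of "Pow F" delta] assms(1) by blast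
  have max: "delta T \<le> delta S" if "T \<subseteq> F" for T
    using assms(1) that S(2) by (metis Max_ge Pow_iff finite_Pow_iff finite_imageI imageI)
  show ?thesis
  proof (cases "S = F")
    case True
    show ?thesis
    proof (rule that[of "{}"])
      show "{} \<subset> F" using assms(2) by blast
      have "delta ({} :: 'a clause set) = 0" by (simp add: delta_def mdelta_def mc_def mn_def mvar_def)
      then show "\<forall>T\<subseteq>F. delta T \<le> delta ({} :: 'a clause set)"
        using max True assms(3) by (auto intro: order_trans[of _ "delta F"])
    qed
  next
    case False
    then show ?thesis using that S(1) max by blast
  qed
qed

lemma sat_Un_if_sat_outside_vars:
  assumes "finite S" "sat S" "\<forall>C\<in>G. \<exists>x\<in>C. lvar x \<notin> var S \<and> lit_true \<psi> x"
  shows "sat (S \<union> G)"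
proof -
  obtain \<phi> where \<phi>: "\<forall>C\<in>S. \<exists>x\<in>C. lit_true \<phi> x" using assms(2) unfolding sat_def by blast
  define \<chi> where "\<chi> v = (if v \<in> var S then \<phi> v else \<psi> v)" for v
  have "\<exists>x\<in>C. lit_true \<chi> x" if "C \<in> S" for C
  proof -
    obtain x where "x \<in> C" "lit_true \<phi> x" using \<phi> \<open>C \<in> S\<close> by blast
    moreover have "lvar x \<in> var S" using \<open>C \<in> S\<close> \<open>x \<in> C\<close> assms(1) by (auto simp: var_eq_UN cvar_def)
    then have "lit_true \<chi> x \<longleftrightarrow> lit_true \<phi> x" by (intro lit_true_cong) (simp add: \<chi>_def)
    ultimately show ?thesis by blast
  qed
  moreover have "\<exists>x\<in>C. lit_true \<chi> x" if "C \<in> G" for C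
  proof -
    obtain x where "x \<in> C" "lvar x \<notin> var S" "lit_true \<psi> x" using assms(3) \<open>C \<in> G\<close> by blast
    moreover from \<open>lvar x \<notin> var S\<close> have "lit_true \<chi> x \<longleftrightarrow> lit_true \<psi> x"
      by (intro lit_true_cong) (simp add: \<chi>_def)
    ultimately show ?thesis by blast
  qed
  ultimately show ?thesis unfolding sat_def by blast
qed

lemma delta_pos_if_minimally_unsat:
  assumes F: "is_clause_set F" and mu: "minimally_unsat F"
  shows "delta F > 0"
proof (rule ccontr)
  assume "\<not> delta F > 0"
  have "finite F" using F by (simp add: is_clause_set_def)
  have "sat {}" by (simp add: sat_def)
  then have "F \<noteq> {}" using mu unfolding minimally_unsat_def by blast
  then obtain S where S: "S \<subset> F" "\<forall>T\<subseteq>F. delta T \<le> delta S"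
    using max_delta_proper_subset_exists \<open>finite F\<close> \<open>\<not> delta F > 0\<close> by (metis linorder_not_less)
  have "finite S" using S(1) \<open>finite F\<close> by (auto intro: finite_subset)
  have "finite (F - S)" using \<open>finite F\<close> by simp
  moreover have "\<forall>C\<in>F - S. finite (cvar C - var S)"
    using F by (auto simp: is_clause_set_def is_clause_def cvar_def)
  moreover have "hall_condition (F - S) (\<lambda>C. cvar C - var S)"
    using S by (intro hall_condition_outside_max_delta[OF F]) auto
  ultimately have "\<exists>f. inj_on f (F - S) \<and> (\<forall>C\<in>F - S. f C \<in> cvar C - var S)"
    by (rule hall_marriage)
  then obtain f where f: "inj_on f (F - S)" "\<forall>C\<in>F - S. f C \<in> cvar C - var S" by blast
  then obtain \<psi> where \<psi>: "\<forall>C\<in>F - S. \<exists>x\<in>C. lvar x = f C \<and> lit_true \<psi> x"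
    using assignment_from_distinct_vars[of f "F - S"] by blast
  have "\<forall>C\<in>F - S. \<exists>x\<in>C. lvar x \<notin> var S \<and> lit_true \<psi> x"
  proof
    fix C assume "C \<in> F - S"
    then obtain x where "x \<in> C" "lvar x = f C" "lit_true \<psi> x" using \<psi> by blast
    moreover have "f C \<notin> var S" using f(2) \<open>C \<in> F - S\<close> by blast
    ultimately show "\<exists>x\<in>C. lvar x \<notin> var S \<and> lit_true \<psi> x" by metis
  qed
  moreover have "sat S" using mu S(1) unfolding minimally_unsat_def by blast
  ultimately have "sat (S \<union> (F - S))" using sat_Un_if_sat_outside_vars \<open>finite S\<close> by blast
  moreover have "S \<union> (F - S) = F" using S(1) by blast
  ultimately show False using mu unfolding minimally_unsat_def by simp
qed

lemma is_clause_set_set_mset: "is_mclause_set F \<Longrightarrow> is_clause_set (set_mset F)"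
  by (simp add: is_mclause_set_def is_clause_set_def)

lemma card_set_mset_le_size: "card (set_mset N) \<le> size N"
  using size_mset_mono[OF mset_set_set_mset_msubset[of N]] by simp

lemma msigma_le:
  assumes F: "is_mclause_set F" and V: "V \<noteq> {}" "V \<subseteq> mvar F"
  shows "msigma F \<le> int (size (filter_mset (\<lambda>C. cvar C \<inter> V \<noteq> {}) F)) - int (card V)"
proof -
  let ?s = "\<lambda>V. int (size (filter_mset (\<lambda>C. cvar C \<inter> V \<noteq> {}) F)) - int (card V)"
  have "finite (mvar F)" using finite_var is_clause_set_set_mset[OF F] by (simp add: mvar_eq_var)
  then have "mn F \<noteq> 0" using V by (auto simp: mn_def)
  have "{?s V | V. V \<noteq> {} \<and> V \<subseteq> mvar F} \<subseteq> ?s ` Pow (mvar F)" by blast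
  then have "finite {?s V | V. V \<noteq> {} \<and> V \<subseteq> mvar F}"
    using \<open>finite (mvar F)\<close> finite_subset by blast
  then show ?thesis using V \<open>mn F \<noteq> 0\<close> unfolding msigma_def by (auto intro: Min_le)
qed

lemma msigma_less_mdelta_if_var_missing:
  assumes F: "is_mclause_set F" and M: "M \<subseteq> set_mset F" "minimally_unsat M"
    and missing: "var M \<subset> mvar F"
  shows "msigma F < mdelta F"
proof -
  define V where "V = mvar F - var M"
  define touches where "touches C \<longleftrightarrow> cvar C \<inter> V \<noteq> {}" for C
  have "is_clause_set M" using is_clause_set_subset[OF is_clause_set_set_mset[OF F] M(1)] .
  then have "finite M" "finite (var M)" using finite_var by (auto simp: is_clause_set_def)
  have "finite (mvar F)" using finite_var is_clause_set_set_mset[OF F] by (simp add: mvar_eq_var)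
  have "msigma F \<le> int (size (filter_mset touches F)) - int (card V)"
    unfolding touches_def by (rule msigma_le[OF F]) (use missing in \<open>auto simp: V_def\<close>)
  moreover have "size F = size (filter_mset touches F) + size (filter_mset (\<lambda>C. \<not> touches C) F)"
    by (metis size_union multiset_partition)
  moreover have "card M \<le> size (filter_mset (\<lambda>C. \<not> touches C) F)"
  proof -
    have "M \<subseteq> set_mset (filter_mset (\<lambda>C. \<not> touches C) F)"
      using M(1) \<open>finite M\<close> by (auto simp: touches_def V_def var_eq_UN)
    then have "card M \<le> card (set_mset (filter_mset (\<lambda>C. \<not> touches C) F))"
      by (intro card_mono) auto
    also have "\<dots> \<le> size (filter_mset (\<lambda>C. \<not> touches C) F)"
      by (rule card_set_mset_le_size)
    finally show ?thesis .
  qed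
  moreover have "card (mvar F) = card V + card (var M)"
  proof -
    have "mvar F = V \<union> var M" using missing by (auto simp: V_def)
    then show ?thesis using \<open>finite (mvar F)\<close> \<open>finite (var M)\<close>
      by (simp only:) (rule card_Un_disjoint, auto simp: V_def)
  qed
  moreover have "card (var M) < card M"
    using delta_pos_if_minimally_unsat[OF \<open>is_clause_set M\<close> M(2)] \<open>finite M\<close> by (simp add: delta_eq_card)
  ultimately show ?thesis by (simp add: mdelta_def mc_def mn_def)
qed

lemma VMU_if_msigma_eq_mdelta:
  assumes F: "is_mclause_set F" and unsat: "\<not> sat (set_mset F)" and eq: "msigma F = mdelta F"
  shows "set_mset F \<in> VMU"
proof -
  have "var F' = var (set_mset F)" if F': "F' \<subseteq> set_mset F" "F' \<in> USAT" for F'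
  proof (rule ccontr)
    assume "var F' \<noteq> var (set_mset F)"
    moreover have "var F' \<subseteq> var (set_mset F)" using F'(1) by (simp add: var_mono)
    ultimately have "var F' \<subset> mvar F" by (simp add: mvar_eq_var)
    have "finite F'" using F'(2) by (simp add: USAT_def is_clause_set_def)
    moreover have "\<not> sat F'" using F'(2) by (simp add: USAT_def)
    ultimately obtain M where M: "M \<subseteq> F'" "minimally_unsat M" by (rule minimally_unsat_subset_exists)
    have "var M \<subseteq> var F'" using \<open>finite F'\<close> M(1) by (rule var_mono)
    then have "msigma F < mdelta F"
      using msigma_less_mdelta_if_var_missing[OF F _ M(2)] M(1) F'(1) \<open>var F' \<subset> mvar F\<close> by blast
    then show False using eq by simp
  qed
  moreover have "set_mset F \<in> USAT" using unsat is_clause_set_set_mset[OF F] by (simp add: USAT_def)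
  ultimately show ?thesis unfolding VMU_def by blast
qed

lemma SED_Int_USAT_subset_VMU: "SED \<inter> USAT \<subseteq> VMU"
proof
  fix F :: "'a clause set" assume F: "F \<in> SED \<inter> USAT"
  then have "finite F" by (simp add: SED_def is_clause_set_def)
  have "is_mclause_set (mset_set F)" using F \<open>finite F\<close> by (simp add: SED_def is_mclause_set_def is_clause_set_def)
  moreover have "\<not> sat (set_mset (mset_set F))" using F \<open>finite F\<close> by (simp add: USAT_def)
  moreover have "msigma (mset_set F) = mdelta (mset_set F)" using F by (simp add: SED_def sigma_def delta_def)
  ultimately have "set_mset (mset_set F) \<in> VMU" by (rule VMU_if_msigma_eq_mdelta)
  then show "F \<in> VMU" using \<open>finite F\<close> by simp
qed

lemma singleton_empty_clause_in_VMU: "{{}} \<in> VMU"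
proof -
  have "{{}} \<in> USAT" by (simp add: USAT_def is_clause_set_def is_clause_def sat_def)
  moreover have "{} \<notin> USAT" by (simp add: USAT_def sat_def)
  ultimately show ?thesis by (auto simp: VMU_def subset_singleton_iff)
qed

lemma singleton_empty_clause_notin_SED: "{{}} \<notin> SED"
  by (simp add: SED_def sigma_def delta_def msigma_def mdelta_def mn_def mc_def mvar_def cvar_def)

theorem corollary9p6:
  shows "(SED \<inter> USAT :: 'a clause set set) \<subset> VMU \<and>
    (\<forall>F :: 'a clause multiset. is_mclause_set F \<and> \<not> sat (set_mset F) \<and> msigma F = mdelta F
        \<longrightarrow> set_mset F \<in> VMU)"
proof -
  have "(SED \<inter> USAT :: 'a clause set set) \<noteq> VMU"
    using singleton_empty_clause_in_VMU singleton_empty_clause_notin_SED by blast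
  with SED_Int_USAT_subset_VMU have "(SED \<inter> USAT :: 'a clause set set) \<subset> VMU" by (rule psubsetI)
  then show ?thesis using VMU_if_msigma_eq_mdelta by blast
qed

end
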